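(* For any finite point set $P\subset\mathbb{R}^1$ containing the source $s$ and any $1/2<\delta<1$, $$\mathrm{cost}_2(\rho_{\mathrm{sb}}(P))\le c_\delta\cdot\mathrm{OPT},\qquad c_\delta:=\max\Big(1+\delta+\frac{(1+5\delta)(1-\delta)^2}{\delta^2},\ \frac1{\delta^2}+\frac12\Big),$$ where $\mathrm{OPT}=\mathrm{cost}_2(\rho_{\mathrm{opt}}(P))$ is the cost of an optimal range assignment on $P$.
   Context: A range assignment $\rho$ on $P$ induces a directed graph with edge $(p,q)$ iff $|pq|\le\rho(p)$; it is feasible if the graph contains an arborescence rooted at $s$ spanning $P$; $\mathrm{cost}_2(\rho(P))=\sum_{p\in P}\rho(p)^2$; an optimal assignment is a feasible one of minimum cost. Points of $P$ left of $s$ are $\ell_1,\ell_2,\dots$ and right of $s$ are $r_1,r_2,\dots$, numbered by increasing distance from $s$. The successor $\mathrm{suc}(p)$ of $r_i$ is $r_{i+1}$ and of $\ell_i$ is $\ell_{i+1}$; $s$ has successors $r_1,\ell_1$; extreme (farthest) points have none ($\mathrm{nil}$). The standard range $\rho_{\mathrm{st}}(p)$ of $p\ne s$ is $|p\,\mathrm{suc}(p)|$, or $0$ if extreme. A point $p\ne s$ is expensive if $\mathrm{suc}(p)\ne\mathrm{nil}$ and $|p\,\mathrm{suc}(p)|>\delta|s\,\mathrm{suc}(p)|$, cheap otherwise; $s$ is always expensive. $d_{\max}=\max\{|s\,\mathrm{suc}(p)|:p\text{ expensive}\}$ (for $p=s$ both successors considered). The source-based assignment: $\rho_{\mathrm{sb}}(s)=d_{\max}$,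 $\rho_{\mathrm{sb}}(p)=0$ for expensive $p\ne s$, $\rho_{\mathrm{sb}}(p)=\rho_{\mathrm{st}}(p)$ for cheap $p$. *)

theory Defs
  imports Complex_Main
begin

definition edges :: "real set \<Rightarrow> (real \<Rightarrow> real) \<Rightarrow> (real \<times> real) set" where
  "edges P \<rho> = {(p, q). p \<in> P \<and> q \<in> P \<and> \<bar>p - q\<bar> \<le> \<rho> p}"

(* the induced graph contains an arborescence rooted at s spanning P,
   i.e. every point of P is reachable from s *)
definition feasible :: "real set \<Rightarrow> real \<Rightarrow> (real \<Rightarrow> real) \<Rightarrow> bool" where
  "feasible P s \<rho> \<longleftrightarrow> (\<forall>p\<in>P. \<rho> p \<ge> 0) \<and> (\<forall>q\<in>P. (s, q) \<in> (edges P \<rho>)\<^sup>*)"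

definition cost2 :: "real set \<Rightarrow> (real \<Rightarrow> real) \<Rightarrow> real" where
  "cost2 P \<rho> = (\<Sum>p\<in>P. (\<rho> p)\<^sup>2)"

definition OPT :: "real set \<Rightarrow> real \<Rightarrow> real" where
  "OPT P s = Inf {cost2 P \<rho> | \<rho>. feasible P s \<rho>}"

definition suc :: "real set \<Rightarrow> real \<Rightarrow> real \<Rightarrow> real option" where
  "suc P s p =
     (if p > s then (if \<exists>q\<in>P. q > p then Some (Min {q\<in>P. q > p}) else None)
      else if p < s then (if \<exists>q\<in>P. q < p then Some (Max {q\<in>P. q < p}) else None)
      else None)"

definition succs_src :: "real set \<Rightarrow> real \<Rightarrow> real set" where
  "succs_src P s =
     (if \<exists>q\<in>P. q > s then {Min {q\<in>P. q > s}} else {}) \<union>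
     (if \<exists>q\<in>P. q < s then {Max {q\<in>P. q < s}} else {})"

definition rho_st :: "real set \<Rightarrow> real \<Rightarrow> real \<Rightarrow> real" where
  "rho_st P s p = (case suc P s p of None \<Rightarrow> 0 | Some q \<Rightarrow> \<bar>p - q\<bar>)"

definition expensive :: "real set \<Rightarrow> real \<Rightarrow> real \<Rightarrow> real \<Rightarrow> bool" where
  "expensive P s \<delta> p \<longleftrightarrow> p = s \<or>
     (\<exists>q. suc P s p = Some q \<and> \<bar>p - q\<bar> > \<delta> * \<bar>s - q\<bar>)"

(* d_max; the 0 only matters in the degenerate case P = {s} where no successor exists *)
definition d_max :: "real set \<Rightarrow> real \<Rightarrow> real \<Rightarrow> real" where
  "d_max P s \<delta> = Max (insert 0
     ({\<bar>s - q\<bar> | q. q \<in> succs_src P s} \<union>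
      {\<bar>s - q\<bar> | p q. p \<in> P \<and> p \<noteq> s \<and> expensive P s \<delta> p \<and> suc P s p = Some q}))"

definition rho_sb :: "real set \<Rightarrow> real \<Rightarrow> real \<Rightarrow> real \<Rightarrow> real" where
  "rho_sb P s \<delta> p =
     (if p = s then d_max P s \<delta>
      else if expensive P s \<delta> p then 0
      else rho_st P s p)"

definition c_delta :: "real \<Rightarrow> real" where
  "c_delta \<delta> = max (1 + \<delta> + (1 + 5 * \<delta>) * (1 - \<delta>)\<^sup>2 / \<delta>\<^sup>2) (1 / \<delta>\<^sup>2 + 1 / 2)"

end

theory Submission
  imports Defs
begin

(* Let rho be any feasible assignment. Since the successor q of a cheap point p is reachable
   from s, some point t of P before q (seen from s) has a range reaching q; the cost
   |p q|^2 of p is charged to such a t. The segments [p, q] charged to t are pairwise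
   disjoint, lie within rho(t) of t and are short compared with their distance to s, and
   a sum of squared lengths of disjoint segments is at most the longest length times the
   total length; this bounds the charge of t by (1 + delta) rho(t)^2. The range d_max of s
   is |s v| for the successor v of an expensive point u (possibly u = s), and the point t
   charged for reaching v also pays d_max^2: its segments on that side lie either below u
   or beyond v, and because u is expensive the excluded gap is long enough to give
   c_delta rho(t)^2. *)

section \<open>Disjoint intervals\<close>

lemma sum_lengths_disjoint_intervals_le:
  fixes u v :: "'a \<Rightarrow> real"
  assumes "finite S" and "lo \<le> hi"
    and "\<And>p. p \<in> S \<Longrightarrow> lo \<le> u p \<and> u p < v p \<and> v p \<le> hi"
    and "\<And>p p'. p \<in> S \<Longrightarrow> p' \<in> S \<Longrightarrow> p \<noteq> p' \<Longrightarrow> v p \<le> u p' \<or> v p' \<le> u p"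
  shows "(\<Sum>p\<in>S. v p - u p) \<le> hi - lo"
  using assms
proof (induction S arbitrary: hi rule: finite_ranking_induct[where f = u])
  case empty
  then show ?case by simp
next
  case (insert x S)
  show ?case
  proof (cases "x \<in> S")
    case True
    then show ?thesis using insert by (simp add: insert_absorb)
  next
    case False
    have "v y \<le> u x" if "y \<in> S" for y
      using insert.prems(2)[of x] insert.prems(2)[of y] insert.prems(3)[of y x]
        insert.hyps(2)[OF that] that False
      by fastforce
    then have "(\<Sum>p\<in>S. v p - u p) \<le> u x - lo"
      using insert.prems by (intro insert.IH) auto
    moreover have "v x - u x \<le> hi - u x" using insert.prems(2) by auto
    ultimately show ?thesis using insert.hyps(1) False by simp
  qed
qed

lemma sum_squares_disjoint_intervals_le:
  fixes u v :: "'a \<Rightarrow> real"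
  assumes "finite S" and "lo \<le> hi"
    and "\<And>p. p \<in> S \<Longrightarrow> lo \<le> u p \<and> u p < v p \<and> v p \<le> hi"
    and "\<And>p p'. p \<in> S \<Longrightarrow> p' \<in> S \<Longrightarrow> p \<noteq> p' \<Longrightarrow> v p \<le> u p' \<or> v p' \<le> u p"
    and "\<And>p. p \<in> S \<Longrightarrow> v p - u p \<le> M" and "0 \<le> M"
  shows "(\<Sum>p\<in>S. (v p - u p)\<^sup>2) \<le> M * (hi - lo)"
proof -
  have "(\<Sum>p\<in>S. (v p - u p)\<^sup>2) \<le> (\<Sum>p\<in>S. M * (v p - u p))"
  proof (rule sum_mono)
    fix p assume "p \<in> S"
    then show "(v p - u p)\<^sup>2 \<le> M * (v p - u p)"
      using assms(3,5) by (auto simp: power2_eq_square intro: mult_right_mono)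
  qed
  also have "\<dots> = M * (\<Sum>p\<in>S. v p - u p)" by (simp add: sum_distrib_left)
  also have "\<dots> \<le> M * (hi - lo)"
    using sum_lengths_disjoint_intervals_le[OF assms(1-4)] assms(6) by (rule mult_left_mono)
  finally show ?thesis .
qed

section \<open>Estimates for the constant\<close>

lemma c_delta_lower_bound:
  assumes "1/2 < \<delta>" and "\<delta> < 1"
  shows "1 + \<delta> + \<delta> * (1 - \<delta>)\<^sup>2 \<le> c_delta \<delta>"
proof -
  have "\<delta> ^ 3 \<le> 1 + 5 * \<delta>"
    using assms power_le_one[of \<delta> 3] by linarith
  then have "\<delta> ^ 3 * (1 - \<delta>)\<^sup>2 \<le> (1 + 5 * \<delta>) * (1 - \<delta>)\<^sup>2"
    by (rule mult_right_mono) simp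
  moreover have "\<delta> ^ 3 * (1 - \<delta>)\<^sup>2 = \<delta> * (1 - \<delta>)\<^sup>2 * \<delta>\<^sup>2"
    by (simp add: power2_eq_square power3_eq_cube)
  ultimately have "\<delta> * (1 - \<delta>)\<^sup>2 \<le> (1 + 5 * \<delta>) * (1 - \<delta>)\<^sup>2 / \<delta>\<^sup>2"
    using assms by (simp add: pos_le_divide_eq)
  then show ?thesis unfolding c_delta_def by linarith
qed

lemma c_delta_chord_bound:
  assumes "1/2 < \<delta>" and "\<delta> < 1"
  shows "1 + \<delta> * (1 - \<delta>)\<^sup>2 + \<delta> * (2 * \<delta> - 1)\<^sup>2 \<le> c_delta \<delta> * \<delta>\<^sup>2"
proof -
  have "1 + \<delta> * (1 - \<delta>)\<^sup>2 + \<delta> * (2 * \<delta> - 1)\<^sup>2 + \<delta> * (1 - \<delta>)\<^sup>2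
      = (1 + \<delta> + (1 + 5 * \<delta>) * (1 - \<delta>)\<^sup>2 / \<delta>\<^sup>2) * \<delta>\<^sup>2"
    using assms by (simp add: field_simps power2_eq_square)
  also have "\<dots> \<le> c_delta \<delta> * \<delta>\<^sup>2"
    unfolding c_delta_def by (intro mult_right_mono) auto
  finally have "1 + \<delta> * (1 - \<delta>)\<^sup>2 + \<delta> * (2 * \<delta> - 1)\<^sup>2 + \<delta> * (1 - \<delta>)\<^sup>2 \<le> c_delta \<delta> * \<delta>\<^sup>2" .
  moreover have "0 \<le> \<delta> * (1 - \<delta>)\<^sup>2" using assms by simp
  ultimately show ?thesis by linarith
qed

lemma weighted_square_add_le:
  fixes A D m :: real
  assumes "1 \<le> A" and "0 \<le> D" and "D \<le> m"
  shows "A * D\<^sup>2 + (m - D)\<^sup>2 \<le> A * m\<^sup>2"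
proof -
  have "(m - D) * (m - D) \<le> (m - D) * (A * (m + D))"
  proof (rule mult_left_mono)
    have "m + D \<le> A * (m + D)" using assms mult_right_mono[of 1 A "m + D"] by simp
    then show "m - D \<le> A * (m + D)" using assms by linarith
  qed (use assms in simp)
  then show ?thesis by (simp add: power2_eq_square algebra_simps)
qed

lemma c_delta_bound_nonneg:
  assumes "1/2 < \<delta>" and "\<delta> < 1" and "0 \<le> x" and "0 \<le> r" and "\<delta> * x \<le> (1 - \<delta>) * r"
  shows "(1 + \<delta> * (1 - \<delta>)\<^sup>2) * (x + r)\<^sup>2 + \<delta> * (r - x)\<^sup>2 \<le> c_delta \<delta> * r\<^sup>2"
proof -
  \<comment> \<open>The left side is convex in \<open>x\<close>; scaled by \<open>\<delta>\<^sup>2\<close> it lies below its chord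
    up to \<open>\<delta> x = (1 - \<delta>) r\<close>.\<close>
  define A where "A = 1 + \<delta> * (1 - \<delta>)\<^sup>2"
  define K where "K = (A + \<delta>) * (1 - \<delta>) + 2 * (A - \<delta>) * \<delta>"
  have "1 \<le> A" using assms(1) unfolding A_def by simp
  then have "0 \<le> K" unfolding K_def using assms(1,2) by (intro add_nonneg_nonneg mult_nonneg_nonneg) auto
  have "\<delta>\<^sup>2 * (A * (x + r)\<^sup>2 + \<delta> * (r - x)\<^sup>2)
      = (A + \<delta>) * \<delta> * (\<delta> * x * x) + 2 * (A - \<delta>) * \<delta>\<^sup>2 * x * r + (A + \<delta>) * \<delta>\<^sup>2 * r\<^sup>2"
    by (simp add: power2_eq_square algebra_simps)
  also have "\<dots> \<le> (A + \<delta>) * \<delta> * ((1 - \<delta>) * r * x) + 2 * (A - \<delta>) * \<delta>\<^sup>2 * x * r + (A + \<delta>) * \<delta>\<^sup>2 * r\<^sup>2"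
    using mult_left_mono[OF mult_right_mono[OF assms(5,3)], of "(A + \<delta>) * \<delta>"] \<open>1 \<le> A\<close> assms(1)
    by simp
  also have "\<dots> = (\<delta> * x) * (r * K) + (A + \<delta>) * \<delta>\<^sup>2 * r\<^sup>2"
    by (simp add: K_def power2_eq_square algebra_simps)
  also have "\<dots> \<le> ((1 - \<delta>) * r) * (r * K) + (A + \<delta>) * \<delta>\<^sup>2 * r\<^sup>2"
    using assms(4,5) \<open>0 \<le> K\<close> by (simp add: mult_right_mono)
  also have "\<dots> = r\<^sup>2 * (A + \<delta> * (2 * \<delta> - 1)\<^sup>2)"
    by (simp add: K_def power2_eq_square algebra_simps)
  also have "\<dots> \<le> r\<^sup>2 * (c_delta \<delta> * \<delta>\<^sup>2)"
    using c_delta_chord_bound[OF assms(1,2)] unfolding A_def by (simp add: mult_left_mono)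
  finally have "\<delta>\<^sup>2 * (A * (x + r)\<^sup>2 + \<delta> * (r - x)\<^sup>2) \<le> \<delta>\<^sup>2 * (c_delta \<delta> * r\<^sup>2)"
    by (simp add: algebra_simps)
  then show ?thesis using assms(1) unfolding A_def by simp
qed

lemma c_delta_bound:
  assumes "1/2 < \<delta>" and "\<delta> < 1" and "0 \<le> r" and "0 \<le> x + r" and "\<delta> * x \<le> (1 - \<delta>) * r"
  shows "(1 + \<delta> * (1 - \<delta>)\<^sup>2) * (x + r)\<^sup>2 + \<delta> * (r - x) * (r - max x 0) \<le> c_delta \<delta> * r\<^sup>2"
proof (cases "0 \<le> x")
  case True
  then show ?thesis using c_delta_bound_nonneg[OF assms(1,2) True assms(3,5)]
    by (simp add: power2_eq_square)
next
  case False
  define A where "A = 1 + \<delta> * (1 - \<delta>)\<^sup>2"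
  have A: "1 \<le> A" "A + \<delta> \<le> c_delta \<delta>"
    using c_delta_lower_bound[OF assms(1,2)] assms(1) unfolding A_def by auto
  have "A * (x + r)\<^sup>2 \<le> A * (r * (x + r))"
    unfolding power2_eq_square using A False assms(4) by (intro mult_left_mono mult_right_mono) auto
  then have "A * (x + r)\<^sup>2 + \<delta> * (r - x) * r \<le> (A + \<delta>) * r\<^sup>2 + (A - \<delta>) * (r * x)"
    by (simp add: power2_eq_square algebra_simps)
  moreover have "(A - \<delta>) * (r * x) \<le> 0"
    using A assms(2,3) False by (intro mult_nonneg_nonpos) (auto simp: mult_nonneg_nonpos)
  moreover have "(A + \<delta>) * r\<^sup>2 \<le> c_delta \<delta> * r\<^sup>2"
    using A by (simp add: mult_right_mono)
  ultimately show ?thesis using False unfolding A_def by simp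
qed

(* The four terms bound d_max^2 and the charges of a transmitter at signed position x with
   range r for segments below the expensive point at a, beyond its successor at D, and on the
   opposite side of s. *)
lemma c_delta_bound_with_gap:
  assumes "1/2 < \<delta>" and "\<delta> < 1" and "0 \<le> a" and "a < (1 - \<delta>) * D"
    and "x \<le> a" and "D \<le> x + r" and "0 \<le> r"
  shows "D\<^sup>2 + \<delta> * a\<^sup>2 + (x + r - D)\<^sup>2 + \<delta> * (r - x) * (r - max x 0) \<le> c_delta \<delta> * r\<^sup>2"
proof -
  define A where "A = 1 + \<delta> * (1 - \<delta>)\<^sup>2"
  have "0 < (1 - \<delta>) * D" using assms(3,4) by linarith
  then have "0 \<le> D" using assms(2) by (simp add: zero_less_mult_iff)
  have "\<delta> * a\<^sup>2 \<le> \<delta> * ((1 - \<delta>) * D)\<^sup>2"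
    using assms(1,3,4) by (intro mult_left_mono power_mono) auto
  then have "D\<^sup>2 + \<delta> * a\<^sup>2 \<le> A * D\<^sup>2"
    by (simp add: A_def power2_eq_square algebra_simps)
  moreover have "A * D\<^sup>2 + (x + r - D)\<^sup>2 \<le> A * (x + r)\<^sup>2"
    using assms(1) \<open>0 \<le> D\<close> assms(6) unfolding A_def by (intro weighted_square_add_le) auto
  moreover have "\<delta> * x \<le> (1 - \<delta>) * r"
  proof -
    have "(1 - \<delta>) * D \<le> (1 - \<delta>) * (x + r)" using assms(2,6) by (simp add: mult_left_mono)
    then show ?thesis using assms(4,5) by (simp add: algebra_simps)
  qed
  moreover have "0 \<le> x + r" using \<open>0 \<le> D\<close> assms(6) by linarith
  ultimately show ?thesis using c_delta_bound[OF assms(1,2,7), of x] unfolding A_def by linarith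
qed

section \<open>Consecutive points on one side of the source\<close>

(* A sign e = 1 or e = -1 selects a side of s; on that side e * (x - s) is the distance
   of x from s. *)
definition side :: "real \<Rightarrow> real \<Rightarrow> real" where
  "side s p = (if s < p then 1 else -1)"

definition adjacent :: "real set \<Rightarrow> real \<Rightarrow> real \<Rightarrow> real \<Rightarrow> real \<Rightarrow> bool" where
  "adjacent P s e u v \<longleftrightarrow> u \<in> P \<and> v \<in> P \<and> 0 \<le> e * (u - s) \<and> e * (u - s) < e * (v - s) \<and>
     (\<forall>z\<in>P. \<not> (e * (u - s) < e * (z - s) \<and> e * (z - s) < e * (v - s)))"

definition covers :: "(real \<Rightarrow> real) \<Rightarrow> real \<Rightarrow> real \<Rightarrow> real \<Rightarrow> real \<Rightarrow> bool" where
  "covers \<rho> s e t v \<longleftrightarrow> e * (t - s) < e * (v - s) \<and> e * (v - s) \<le> e * (t - s) + \<rho> t"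

lemma abs_side [simp]: "\<bar>side s p\<bar> = 1"
  by (simp add: side_def)

lemma side_eqI:
  fixes e :: real
  assumes "\<bar>e\<bar> = 1" and "0 < e * (x - s)"
  shows "side s x = e"
  using assms by (auto simp: side_def abs_if zero_less_mult_iff split: if_splits)

lemma adjacent_disjoint:
  assumes "\<bar>e\<bar> = 1" and "adjacent P s e u v" and "adjacent P s e u' v'" and "u \<noteq> u'"
  shows "e * (v - s) \<le> e * (u' - s) \<or> e * (v' - s) \<le> e * (u - s)"
proof -
  have "e * (u - s) \<noteq> e * (u' - s)" using assms(1,4) by auto
  then show ?thesis using assms(2,3) unfolding adjacent_def by (meson linorder_neqE not_le)
qed

lemma adjacent_dist:
  assumes "\<bar>e\<bar> = 1" and "adjacent P s e u v"
  shows "\<bar>u - v\<bar> = e * (v - s) - e * (u - s)" and "\<bar>s - v\<bar> = e * (v - s)"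
  using assms unfolding adjacent_def by (auto simp: abs_if algebra_simps split: if_splits)

lemma adjacent_no_point_between:
  assumes "adjacent P s e u v" and "t \<in> P" and "e * (t - s) < e * (v - s)"
  shows "e * (t - s) \<le> e * (u - s)"
  using assms unfolding adjacent_def by force

lemma adjacent_Min:
  assumes "finite P" and "u \<in> P" and "s \<le> u" and "\<exists>q\<in>P. u < q"
  shows "adjacent P s 1 u (Min {q\<in>P. u < q})"
proof -
  have "Min {q\<in>P. u < q} \<in> {q\<in>P. u < q}" using assms by (intro Min_in) auto
  moreover have "Min {q\<in>P. u < q} \<le> z" if "z \<in> P" and "u < z" for z
    using assms that by (intro Min_le) auto
  ultimately show ?thesis using assms unfolding adjacent_def by (simp, meson linorder_not_le)
qed

lemma adjacent_Max:
  assumes "finite P" and "u \<in> P" and "u \<le> s" and "\<exists>q\<in>P. q < u"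
  shows "adjacent P s (-1) u (Max {q\<in>P. q < u})"
proof -
  have "Max {q\<in>P. q < u} \<in> {q\<in>P. q < u}" using assms by (intro Max_in) auto
  moreover have "z \<le> Max {q\<in>P. q < u}" if "z \<in> P" and "z < u" for z
    using assms that by (intro Max_ge) auto
  ultimately show ?thesis using assms unfolding adjacent_def by (simp, meson linorder_not_le)
qed

lemma adjacent_suc:
  assumes "finite P" and "p \<in> P" and "p \<noteq> s" and "suc P s p = Some q"
  shows "adjacent P s (side s p) p q"
proof (cases "s < p")
  case True
  then show ?thesis
    using assms adjacent_Min[OF assms(1,2)] unfolding suc_def side_def by (auto split: if_splits)
next
  case False
  then show ?thesis
    using assms adjacent_Max[OF assms(1,2)] unfolding suc_def side_def by (auto split: if_splits)
qed

lemma adjacent_succs_src: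
  assumes "finite P" and "s \<in> P" and "q \<in> succs_src P s"
  shows "adjacent P s (side s q) s q"
proof -
  have "adjacent P s 1 s q \<or> adjacent P s (-1) s q"
    using assms adjacent_Min[OF assms(1,2)] adjacent_Max[OF assms(1,2)]
    unfolding succs_src_def by (auto split: if_splits)
  then obtain e where e: "\<bar>e\<bar> = 1" and adj: "adjacent P s e s q" by force
  then have "side s q = e" using side_eqI[OF e] unfolding adjacent_def by simp
  then show ?thesis using adj by simp
qed

lemma feasible_cover:
  assumes "feasible P s \<rho>" and "s \<in> P" and "\<bar>e\<bar> = 1" and "q \<in> P" and "0 < e * (q - s)"
  obtains t where "t \<in> P" and "covers \<rho> s e t q"
proof -
  have "\<exists>t\<in>P. covers \<rho> s e t q"
  proof (rule ccontr)
    assume uncovered: "\<not> (\<exists>t\<in>P. covers \<rho> s e t q)"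
    have "z \<in> P \<and> e * (z - s) < e * (q - s)" if "(s, z) \<in> (edges P \<rho>)\<^sup>*" for z
      using that
    proof (induction rule: rtrancl_induct)
      case base
      then show ?case using assms(2,5) by simp
    next
      case (step y z)
      then have "y \<in> P" "z \<in> P" "\<bar>y - z\<bar> \<le> \<rho> y" unfolding edges_def by auto
      moreover have "e * (z - s) \<le> e * (y - s) + \<bar>y - z\<bar>"
        using assms(3) by (auto simp: abs_if algebra_simps split: if_splits)
      ultimately show ?case using uncovered step.IH unfolding covers_def by fastforce
    qed
    moreover have "(s, q) \<in> (edges P \<rho>)\<^sup>*" using assms(1,4) unfolding feasible_def by blast
    ultimately show False by blast
  qed
  then show ?thesis using that by blast
qed

lemma d_max_eq_0:
  assumes "P \<subseteq> {s}"
  shows "d_max P s \<delta> = 0"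
proof -
  have "succs_src P s = {}" using assms unfolding succs_src_def by auto
  moreover have
    empty: "{\<bar>s - v\<bar> | u v. u \<in> P \<and> u \<noteq> s \<and> expensive P s \<delta> u \<and> suc P s u = Some v} = {}"
    using assms by auto
  ultimately show ?thesis unfolding d_max_def empty by simp
qed

lemma d_max_attained:
  assumes "finite P" and "s \<in> P" and "q \<in> P" and "q \<noteq> s"
  obtains v where "d_max P s \<delta> = \<bar>s - v\<bar>"
    and "v \<in> succs_src P s \<or> (\<exists>u\<in>P. u \<noteq> s \<and> expensive P s \<delta> u \<and> suc P s u = Some v)"
proof -
  define C where "C = {\<bar>s - v\<bar> | v. v \<in> succs_src P s} \<union>
    {\<bar>s - v\<bar> | u v. u \<in> P \<and> u \<noteq> s \<and> expensive P s \<delta> u \<and> suc P s u = Some v}"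
  have "C \<subseteq> (\<lambda>v. \<bar>s - v\<bar>) ` P"
    using adjacent_succs_src[OF assms(1,2)] adjacent_suc[OF assms(1)]
    unfolding C_def adjacent_def by blast
  then have "finite (insert 0 C)" using assms(1) finite_subset by auto
  have "succs_src P s \<noteq> {}"
    using assms(3,4) unfolding succs_src_def by (cases "s < q") (auto split: if_splits)
  then obtain v0 where "v0 \<in> succs_src P s" by blast
  then have "0 < \<bar>s - v0\<bar>" and "\<bar>s - v0\<bar> \<in> C"
    using adjacent_succs_src[OF assms(1,2)] unfolding C_def adjacent_def by fastforce+
  then have "0 < Max (insert 0 C)"
    using \<open>finite (insert 0 C)\<close> by (meson Max_ge insertCI order.strict_trans2)
  moreover have "Max (insert 0 C) \<in> insert 0 C"
    using \<open>finite (insert 0 C)\<close> by (intro Max_in) auto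
  ultimately have "d_max P s \<delta> \<in> C" unfolding d_max_def C_def by auto
  then show ?thesis using that unfolding C_def by blast
qed

lemma d_max_witness:
  assumes "finite P" and "s \<in> P" and "q \<in> P" and "q \<noteq> s" and "\<delta> < 1"
  obtains e u v where "\<bar>e\<bar> = 1" and "adjacent P s e u v" and "expensive P s \<delta> u"
    and "d_max P s \<delta> = e * (v - s)" and "e * (u - s) < (1 - \<delta>) * (e * (v - s))"
proof -
  obtain v where v: "d_max P s \<delta> = \<bar>s - v\<bar>"
    and src_or_expensive: "v \<in> succs_src P s \<or> (\<exists>u\<in>P. u \<noteq> s \<and> expensive P s \<delta> u \<and> suc P s u = Some v)"
    using d_max_attained[OF assms(1-4)] by blast
  from src_or_expensive show ?thesis
  proof
    assume "v \<in> succs_src P s"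
    then have adj: "adjacent P s (side s v) s v" by (rule adjacent_succs_src[OF assms(1,2)])
    then have "0 < side s v * (v - s)" unfolding adjacent_def by simp
    then show ?thesis
      using that[OF abs_side adj] adjacent_dist(2)[OF abs_side adj] v assms(5)
      by (simp add: expensive_def)
  next
    assume "\<exists>u\<in>P. u \<noteq> s \<and> expensive P s \<delta> u \<and> suc P s u = Some v"
    then obtain u where u: "u \<in> P" "u \<noteq> s" "expensive P s \<delta> u" "suc P s u = Some v" by blast
    then have adj: "adjacent P s (side s u) u v" by (intro adjacent_suc[OF assms(1)])
    have "\<delta> * \<bar>s - v\<bar> < \<bar>u - v\<bar>" using u unfolding expensive_def by auto
    then show ?thesis
      using that[OF abs_side adj u(3)] adjacent_dist[OF abs_side adj] v by (simp add: algebra_simps)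
  qed
qed

section \<open>Charging cheap points to a feasible assignment\<close>

locale source_based_setting =
  fixes P :: "real set" and s \<delta> :: real
  assumes finite_P: "finite P" and s_in_P: "s \<in> P"
    and delta_gt: "1/2 < \<delta>" and delta_lt: "\<delta> < 1"
begin

definition cheap_with_suc :: "real set" where
  "cheap_with_suc = {p \<in> P. p \<noteq> s \<and> \<not> expensive P s \<delta> p \<and> suc P s p \<noteq> None}"

definition nxt :: "real \<Rightarrow> real" where
  "nxt p = the (suc P s p)"

lemma cheap_with_sucD:
  assumes "p \<in> cheap_with_suc"
  shows "p \<in> P" and "p \<noteq> s" and "\<not> expensive P s \<delta> p" and "suc P s p = Some (nxt p)"
  using assms unfolding cheap_with_suc_def nxt_def by auto

lemma one_plus_delta_le_c_delta: "1 + \<delta> \<le> c_delta \<delta>"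
proof -
  have "0 \<le> \<delta> * (1 - \<delta>)\<^sup>2" using delta_gt by simp
  then show ?thesis using c_delta_lower_bound[OF delta_gt delta_lt] by linarith
qed

lemma finite_cheap_with_suc: "finite cheap_with_suc"
  using finite_P unfolding cheap_with_suc_def by simp

lemma cheap_adjacent: "p \<in> cheap_with_suc \<Longrightarrow> adjacent P s (side s p) p (nxt p)"
  using adjacent_suc[OF finite_P] cheap_with_sucD by blast

lemma cheap_short: "p \<in> cheap_with_suc \<Longrightarrow> \<bar>p - nxt p\<bar> \<le> \<delta> * \<bar>s - nxt p\<bar>"
  using cheap_with_sucD unfolding expensive_def by force

lemma cost2_rho_sb:
  "cost2 P (rho_sb P s \<delta>) = (d_max P s \<delta>)\<^sup>2 + (\<Sum>p\<in>cheap_with_suc. (p - nxt p)\<^sup>2)"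
proof -
  have "cost2 P (rho_sb P s \<delta>) = (rho_sb P s \<delta> s)\<^sup>2 + (\<Sum>p\<in>P - {s}. (rho_sb P s \<delta> p)\<^sup>2)"
    unfolding cost2_def by (rule sum.remove[OF finite_P s_in_P])
  also have "rho_sb P s \<delta> s = d_max P s \<delta>" by (simp add: rho_sb_def)
  also have "(\<Sum>p\<in>P - {s}. (rho_sb P s \<delta> p)\<^sup>2) = (\<Sum>p\<in>cheap_with_suc. (rho_sb P s \<delta> p)\<^sup>2)"
    using finite_P
    by (intro sum.mono_neutral_right) (auto simp: cheap_with_suc_def rho_sb_def rho_st_def split: option.splits)
  also have "\<dots> = (\<Sum>p\<in>cheap_with_suc. (p - nxt p)\<^sup>2)"
    by (intro sum.cong) (auto dest: cheap_with_sucD simp: rho_sb_def rho_st_def)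
  finally show ?thesis .
qed

end

locale source_based_vs_feasible = source_based_setting +
  fixes \<rho> :: "real \<Rightarrow> real"
  assumes feasible: "feasible P s \<rho>"
begin

(* The point to which the cost of the cheap point p is charged (it exists by feasible_cover). *)
definition cover :: "real \<Rightarrow> real" where
  "cover p = (SOME t. t \<in> P \<and> covers \<rho> s (side s p) t (nxt p))"

definition fiber :: "real \<Rightarrow> real \<Rightarrow> real set" where
  "fiber e t = {p \<in> cheap_with_suc. cover p = t \<and> 0 < e * (p - s)}"

definition fiber_cost :: "real \<Rightarrow> real" where
  "fiber_cost t = (\<Sum>p | p \<in> cheap_with_suc \<and> cover p = t. (p - nxt p)\<^sup>2)"

lemma rho_nonneg: "t \<in> P \<Longrightarrow> 0 \<le> \<rho> t"
  using feasible unfolding feasible_def by auto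

lemma cover:
  assumes "p \<in> cheap_with_suc"
  shows "cover p \<in> P" and "covers \<rho> s (side s p) (cover p) (nxt p)"
proof -
  have "nxt p \<in> P" and "0 < side s p * (nxt p - s)"
    using cheap_adjacent[OF assms] unfolding adjacent_def by auto
  then obtain t where "t \<in> P" and "covers \<rho> s (side s p) t (nxt p)"
    using feasible_cover[OF feasible s_in_P abs_side] by blast
  then have "cover p \<in> P \<and> covers \<rho> s (side s p) (cover p) (nxt p)"
    unfolding cover_def by (intro someI[of "\<lambda>t. t \<in> P \<and> covers \<rho> s (side s p) t (nxt p)"]) simp
  then show "cover p \<in> P" and "covers \<rho> s (side s p) (cover p) (nxt p)" by auto
qed

lemma fiberD:
  assumes e: "\<bar>e\<bar> = 1" and p: "p \<in> fiber e t"
  shows "p \<in> cheap_with_suc" and "t \<in> P" and "0 < e * (p - s)" and "adjacent P s e p (nxt p)"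
    and "e * (t - s) \<le> e * (p - s)" and "e * (nxt p - s) \<le> e * (t - s) + \<rho> t"
    and "e * (nxt p - s) - e * (p - s) \<le> \<delta> * (e * (nxt p - s))"
    and "(p - nxt p)\<^sup>2 = (e * (nxt p - s) - e * (p - s))\<^sup>2"
proof -
  show cheap: "p \<in> cheap_with_suc" and pos: "0 < e * (p - s)" using p unfolding fiber_def by auto
  have "side s p = e" using side_eqI[OF e pos] .
  then have adj: "adjacent P s e p (nxt p)" and cov: "covers \<rho> s e t (nxt p)"
    using cheap_adjacent[OF cheap] cover[OF cheap] p unfolding fiber_def by auto
  show "adjacent P s e p (nxt p)" by (fact adj)
  show "t \<in> P" using cover(1)[OF cheap] p unfolding fiber_def by auto
  then show "e * (t - s) \<le> e * (p - s)"
    using adjacent_no_point_between[OF adj] cov unfolding covers_def by blast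
  show "e * (nxt p - s) \<le> e * (t - s) + \<rho> t" using cov unfolding covers_def by blast
  show "e * (nxt p - s) - e * (p - s) \<le> \<delta> * (e * (nxt p - s))"
    using cheap_short[OF cheap] adjacent_dist[OF e adj] by simp
  show "(p - nxt p)\<^sup>2 = (e * (nxt p - s) - e * (p - s))\<^sup>2"
    using adjacent_dist(1)[OF e adj] by (metis power2_abs)
qed

lemma finite_fiber: "finite (fiber e t)"
  using finite_cheap_with_suc unfolding fiber_def by simp

lemma fiber_cost_split:
  assumes "\<bar>e\<bar> = 1"
  shows "fiber_cost t = (\<Sum>p\<in>fiber e t. (p - nxt p)\<^sup>2) + (\<Sum>p\<in>fiber (-e) t. (p - nxt p)\<^sup>2)"
proof -
  have "{p. p \<in> cheap_with_suc \<and> cover p = t} = fiber e t \<union> fiber (-e) t"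
    using assms unfolding fiber_def
    by (auto simp: abs_if zero_less_mult_iff dest: cheap_with_sucD(2) split: if_splits)
  moreover have "fiber e t \<inter> fiber (-e) t = {}" unfolding fiber_def by auto
  ultimately show ?thesis
    unfolding fiber_cost_def by (simp add: sum.union_disjoint finite_fiber)
qed

lemma sum_cheap_eq_sum_fiber_cost: "(\<Sum>p\<in>cheap_with_suc. (p - nxt p)\<^sup>2) = (\<Sum>t\<in>P. fiber_cost t)"
  unfolding fiber_cost_def
  using sum.group[OF finite_cheap_with_suc finite_P, of cover "\<lambda>p. (p - nxt p)\<^sup>2"] cover(1)
  by fastforce

lemma sum_fiber_le:
  assumes e: "\<bar>e\<bar> = 1" and X: "X \<subseteq> fiber e t" and "lo \<le> hi" and "0 \<le> M"
    and bounds: "\<And>p. p \<in> X \<Longrightarrow>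
      lo \<le> e * (p - s) \<and> e * (nxt p - s) \<le> hi \<and> e * (nxt p - s) - e * (p - s) \<le> M"
  shows "(\<Sum>p\<in>X. (p - nxt p)\<^sup>2) \<le> M * (hi - lo)"
proof -
  have adj: "adjacent P s e p (nxt p)" if "p \<in> X" for p
    using fiberD(4)[OF e] X that by blast
  have "(\<Sum>p\<in>X. (p - nxt p)\<^sup>2) = (\<Sum>p\<in>X. (e * (nxt p - s) - e * (p - s))\<^sup>2)"
    using fiberD(8)[OF e] X by (intro sum.cong) auto
  also have "\<dots> \<le> M * (hi - lo)"
  proof (rule sum_squares_disjoint_intervals_le)
    show "finite X" using finite_subset[OF X finite_fiber] .
    show "lo \<le> e * (p - s) \<and> e * (p - s) < e * (nxt p - s) \<and> e * (nxt p - s) \<le> hi"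
      if "p \<in> X" for p
      using bounds[OF that] adj[OF that] unfolding adjacent_def by auto
    show "e * (nxt p - s) \<le> e * (p' - s) \<or> e * (nxt p' - s) \<le> e * (p - s)"
      if "p \<in> X" and "p' \<in> X" and "p \<noteq> p'" for p p'
      using adjacent_disjoint[OF e adj adj] that by blast
  qed (use assms in auto)
  finally show ?thesis .
qed

lemma fiber_eq_empty:
  assumes e: "\<bar>e\<bar> = 1" and "e * (t - s) + \<rho> t \<le> 0"
  shows "fiber e t = {}"
proof -
  have False if "p \<in> fiber e t" for p
    using fiberD(3,6)[OF e that] fiberD(4)[OF e that] assms(2) unfolding adjacent_def by linarith
  then show ?thesis by blast
qed

lemma sum_fiber_le_delta:
  assumes e: "\<bar>e\<bar> = 1" and t: "t \<in> P"
  shows "(\<Sum>p\<in>fiber e t. (p - nxt p)\<^sup>2)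
    \<le> \<delta> * (e * (t - s) + \<rho> t) * (e * (t - s) + \<rho> t - max 0 (e * (t - s)))"
proof (cases "0 \<le> e * (t - s) + \<rho> t")
  case True
  show ?thesis
  proof (rule sum_fiber_le[OF e subset_refl])
    show "max 0 (e * (t - s)) \<le> e * (t - s) + \<rho> t" using rho_nonneg[OF t] True by simp
    show "0 \<le> \<delta> * (e * (t - s) + \<rho> t)" using delta_gt True by simp
    fix p assume p: "p \<in> fiber e t"
    have "\<delta> * (e * (nxt p - s)) \<le> \<delta> * (e * (t - s) + \<rho> t)"
      using fiberD(6)[OF e p] delta_gt by (simp add: mult_left_mono)
    then show "max 0 (e * (t - s)) \<le> e * (p - s) \<and> e * (nxt p - s) \<le> e * (t - s) + \<rho> t \<and>
        e * (nxt p - s) - e * (p - s) \<le> \<delta> * (e * (t - s) + \<rho> t)"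
      using fiberD(3,5,6,7)[OF e p] by simp
  qed
next
  case False
  then have "fiber e t = {}" by (intro fiber_eq_empty[OF e]) simp
  moreover have "max 0 (e * (t - s)) = 0" using False rho_nonneg[OF t] by simp
  ultimately show ?thesis using delta_gt by (simp add: mult.assoc)
qed

lemma fiber_cost_le:
  assumes t: "t \<in> P"
  shows "fiber_cost t \<le> (1 + \<delta>) * (\<rho> t)\<^sup>2"
proof -
  define e :: real where "e = (if s \<le> t then 1 else -1)"
  define x r where "x = e * (t - s)" and "r = \<rho> t"
  have e: "\<bar>e\<bar> = 1" and "0 \<le> x" unfolding e_def x_def by auto
  have "0 \<le> r" using rho_nonneg[OF t] unfolding r_def .
  show ?thesis
  proof (cases "x \<le> r")
    case True
    have "(\<Sum>p\<in>fiber e t. (p - nxt p)\<^sup>2) \<le> \<delta> * (x + r) * r"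
      using sum_fiber_le_delta[OF e t] \<open>0 \<le> x\<close> unfolding x_def r_def by simp
    moreover have "(\<Sum>p\<in>fiber (-e) t. (p - nxt p)\<^sup>2) \<le> \<delta> * (r - x) * (r - x)"
      using sum_fiber_le_delta[of "-e" t] e t \<open>0 \<le> x\<close> unfolding x_def r_def by simp
    moreover have "\<delta> * (x + r) * r + \<delta> * (r - x) * (r - x) \<le> (1 + \<delta>) * r\<^sup>2"
    proof -
      have "\<delta> * (x + r) * r + \<delta> * (r - x) * (r - x) = 2 * \<delta> * r\<^sup>2 - \<delta> * (x * (r - x))"
        by (simp add: power2_eq_square algebra_simps)
      moreover have "0 \<le> \<delta> * (x * (r - x))" using delta_gt \<open>0 \<le> x\<close> True by simp
      moreover have "2 * \<delta> * r\<^sup>2 \<le> (1 + \<delta>) * r\<^sup>2" using delta_lt by (intro mult_right_mono) auto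
      ultimately show ?thesis by linarith
    qed
    ultimately show ?thesis using fiber_cost_split[OF e, of t] unfolding r_def by linarith
  next
    case False
    have "fiber (-e) t = {}" using False e unfolding x_def r_def by (intro fiber_eq_empty) auto
    moreover have "(\<Sum>p\<in>fiber e t. (p - nxt p)\<^sup>2) \<le> r * ((x + r) - x)"
    proof (rule sum_fiber_le[OF e subset_refl])
      fix p assume p: "p \<in> fiber e t"
      show "x \<le> e * (p - s) \<and> e * (nxt p - s) \<le> x + r \<and> e * (nxt p - s) - e * (p - s) \<le> r"
        using fiberD(5,6)[OF e p] unfolding x_def r_def by simp
    qed (use \<open>0 \<le> r\<close> in simp_all)
    moreover have "r * ((x + r) - x) \<le> (1 + \<delta>) * r\<^sup>2"
      using mult_right_mono[of 1 "1 + \<delta>" "r\<^sup>2"] delta_gt by (simp add: power2_eq_square)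
    ultimately show ?thesis using fiber_cost_split[OF e, of t] unfolding r_def by simp
  qed
qed

(* The charged segments on the side of the expensive point u lie either below u or beyond
   its successor v. *)
lemma sum_fiber_split_at_expensive:
  assumes e: "\<bar>e\<bar> = 1" and uv: "adjacent P s e u v" and u: "expensive P s \<delta> u"
    and t: "t \<in> P" and cov: "covers \<rho> s e t v"
  shows "(\<Sum>p\<in>fiber e t. (p - nxt p)\<^sup>2) \<le> \<delta> * (e * (u - s))\<^sup>2 + (e * (t - s) + \<rho> t - e * (v - s))\<^sup>2"
proof -
  define a D y where "a = e * (u - s)" and "D = e * (v - s)" and "y = e * (t - s) + \<rho> t"
  have "0 \<le> a" using uv unfolding adjacent_def a_def by simp
  have "D \<le> y" using cov unfolding covers_def D_def y_def by simp
  define L where "L = {p \<in> fiber e t. e * (nxt p - s) \<le> a}"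
  have "L \<subseteq> fiber e t" unfolding L_def by blast
  have "(\<Sum>p\<in>L. (p - nxt p)\<^sup>2) \<le> \<delta> * a * (a - 0)"
  proof (rule sum_fiber_le[OF e \<open>L \<subseteq> fiber e t\<close>])
    fix p assume "p \<in> L"
    then have p: "p \<in> fiber e t" and "e * (nxt p - s) \<le> a" unfolding L_def by auto
    moreover have "\<delta> * (e * (nxt p - s)) \<le> \<delta> * a"
      using \<open>e * (nxt p - s) \<le> a\<close> delta_gt by simp
    ultimately show "0 \<le> e * (p - s) \<and> e * (nxt p - s) \<le> a \<and> e * (nxt p - s) - e * (p - s) \<le> \<delta> * a"
      using fiberD(3,7)[OF e p] by simp
  qed (use \<open>0 \<le> a\<close> delta_gt in simp_all)
  moreover have "(\<Sum>p\<in>fiber e t - L. (p - nxt p)\<^sup>2) \<le> (y - D) * (y - D)"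
  proof (rule sum_fiber_le[OF e Diff_subset])
    fix p assume "p \<in> fiber e t - L"
    then have p: "p \<in> fiber e t" and "\<not> e * (nxt p - s) \<le> a" unfolding L_def by auto
    have "p \<noteq> u" using cheap_with_sucD(3)[OF fiberD(1)[OF e p]] u by blast
    then have "D \<le> e * (p - s)"
      using adjacent_disjoint[OF e fiberD(4)[OF e p] uv] \<open>\<not> e * (nxt p - s) \<le> a\<close>
      unfolding a_def D_def by blast
    then show "D \<le> e * (p - s) \<and> e * (nxt p - s) \<le> y \<and> e * (nxt p - s) - e * (p - s) \<le> y - D"
      using fiberD(6)[OF e p] unfolding y_def by simp
  qed (use \<open>D \<le> y\<close> in simp_all)
  moreover have "(\<Sum>p\<in>fiber e t. (p - nxt p)\<^sup>2)
      = (\<Sum>p\<in>fiber e t - L. (p - nxt p)\<^sup>2) + (\<Sum>p\<in>L. (p - nxt p)\<^sup>2)"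
    by (rule sum.subset_diff[OF \<open>L \<subseteq> fiber e t\<close> finite_fiber])
  ultimately show ?thesis unfolding a_def D_def y_def by (simp add: power2_eq_square)
qed

lemma fiber_cost_covering_d_max_le:
  assumes e: "\<bar>e\<bar> = 1" and uv: "adjacent P s e u v" and u: "expensive P s \<delta> u"
    and gap: "e * (u - s) < (1 - \<delta>) * (e * (v - s))" and t: "t \<in> P" and cov: "covers \<rho> s e t v"
  shows "(e * (v - s))\<^sup>2 + fiber_cost t \<le> c_delta \<delta> * (\<rho> t)\<^sup>2"
proof -
  define a D x r where "a = e * (u - s)" and "D = e * (v - s)" and "x = e * (t - s)" and "r = \<rho> t"
  have "0 \<le> a" using uv unfolding adjacent_def a_def by simp
  have "x \<le> a" using adjacent_no_point_between[OF uv t] cov unfolding covers_def a_def x_def by blast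
  have "D \<le> x + r" using cov unfolding covers_def D_def x_def r_def by simp
  have "0 \<le> r" using rho_nonneg[OF t] unfolding r_def .
  have "(\<Sum>p\<in>fiber (-e) t. (p - nxt p)\<^sup>2) \<le> \<delta> * (r - x) * (r - x - max 0 (-x))"
    using sum_fiber_le_delta[of "-e" t] e t unfolding x_def r_def by simp
  also have "r - x - max 0 (-x) = r - max x 0" by (simp add: max_def)
  finally have "fiber_cost t \<le> \<delta> * a\<^sup>2 + (x + r - D)\<^sup>2 + \<delta> * (r - x) * (r - max x 0)"
    using fiber_cost_split[OF e, of t] sum_fiber_split_at_expensive[OF e uv u t cov]
    unfolding a_def D_def x_def r_def by linarith
  then show ?thesis
    using c_delta_bound_with_gap[OF delta_gt delta_lt \<open>0 \<le> a\<close> gap[folded a_def D_def] \<open>x \<le> a\<close>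
        \<open>D \<le> x + r\<close> \<open>0 \<le> r\<close>]
    unfolding D_def r_def by linarith
qed

lemma cost2_rho_sb_le: "cost2 P (rho_sb P s \<delta>) \<le> c_delta \<delta> * cost2 P \<rho>"
proof (cases "P \<subseteq> {s}")
  case True
  then have "cheap_with_suc = {}" unfolding cheap_with_suc_def by auto
  then have "cost2 P (rho_sb P s \<delta>) = 0" using cost2_rho_sb d_max_eq_0[OF True] by simp
  moreover have "0 \<le> c_delta \<delta> * cost2 P \<rho>"
    using one_plus_delta_le_c_delta delta_gt unfolding cost2_def by (simp add: sum_nonneg)
  ultimately show ?thesis by simp
next
  case False
  then obtain q where "q \<in> P" and "q \<noteq> s" by blast
  then obtain e u v where e: "\<bar>e\<bar> = 1" and uv: "adjacent P s e u v" and u: "expensive P s \<delta> u"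
    and d_max: "d_max P s \<delta> = e * (v - s)" and gap: "e * (u - s) < (1 - \<delta>) * (e * (v - s))"
    using d_max_witness[OF finite_P s_in_P _ _ delta_lt] by metis
  have "v \<in> P" and "0 < e * (v - s)" using uv unfolding adjacent_def by auto
  then obtain t where t: "t \<in> P" and cov: "covers \<rho> s e t v"
    using feasible_cover[OF feasible s_in_P e] by blast
  have "cost2 P (rho_sb P s \<delta>) = (e * (v - s))\<^sup>2 + fiber_cost t + (\<Sum>t'\<in>P - {t}. fiber_cost t')"
    using cost2_rho_sb sum_cheap_eq_sum_fiber_cost sum.remove[OF finite_P t] d_max by simp
  also have "\<dots> \<le> c_delta \<delta> * (\<rho> t)\<^sup>2 + (\<Sum>t'\<in>P - {t}. c_delta \<delta> * (\<rho> t')\<^sup>2)"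
  proof (intro add_mono sum_mono)
    fix t' assume "t' \<in> P - {t}"
    then show "fiber_cost t' \<le> c_delta \<delta> * (\<rho> t')\<^sup>2"
      using fiber_cost_le one_plus_delta_le_c_delta by (fastforce intro: order_trans mult_right_mono)
  qed (rule fiber_cost_covering_d_max_le[OF e uv u gap t cov])
  also have "\<dots> = c_delta \<delta> * cost2 P \<rho>"
    unfolding cost2_def sum_distrib_left by (simp add: sum.remove[OF finite_P t])
  finally show ?thesis .
qed

end

lemma feasible_const_range:
  assumes "finite P" and "s \<in> P"
  shows "feasible P s (\<lambda>_. \<Sum>q\<in>P. \<bar>q - s\<bar>)"
  unfolding feasible_def
proof (intro conjI ballI)
  fix q assume "q \<in> P"
  then have "\<bar>s - q\<bar> \<le> (\<Sum>q\<in>P. \<bar>q - s\<bar>)"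
    using member_le_sum[of q P "\<lambda>q. \<bar>q - s\<bar>"] assms(1) by (simp add: abs_minus_commute)
  then show "(s, q) \<in> (edges P (\<lambda>_. \<Sum>q\<in>P. \<bar>q - s\<bar>))\<^sup>*"
    using assms(2) \<open>q \<in> P\<close> unfolding edges_def by (intro r_into_rtrancl) simp
qed (simp add: sum_nonneg)

lemma le_mult_OPT:
  assumes "finite P" and "s \<in> P" and "0 < c"
    and "\<And>\<rho>. feasible P s \<rho> \<Longrightarrow> y \<le> c * cost2 P \<rho>"
  shows "y \<le> c * OPT P s"
proof -
  have "y / c \<le> OPT P s"
    unfolding OPT_def
  proof (rule cInf_greatest)
    show "{cost2 P \<rho> | \<rho>. feasible P s \<rho>} \<noteq> {}" using feasible_const_range[OF assms(1,2)] by blast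
  qed (use assms(3,4) in \<open>auto simp: pos_divide_le_eq mult.commute\<close>)
  then show ?thesis using assms(3) by (simp add: pos_divide_le_eq mult.commute)
qed

theorem lemma12:
  fixes P :: "real set" and s \<delta> :: real
  assumes "finite P" and "s \<in> P" and "1 / 2 < \<delta>" and "\<delta> < 1"
  shows "cost2 P (rho_sb P s \<delta>) \<le> c_delta \<delta> * OPT P s"
proof (rule le_mult_OPT[OF assms(1,2)])
  interpret source_based_setting P s \<delta> using assms by unfold_locales
  show "0 < c_delta \<delta>" using one_plus_delta_le_c_delta assms(3) by linarith
  fix \<rho> assume "feasible P s \<rho>"
  then interpret source_based_vs_feasible P s \<delta> \<rho> by unfold_locales
  show "cost2 P (rho_sb P s \<delta>) \<le> c_delta \<delta> * cost2 P \<rho>" by (rule cost2_rho_sb_le)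
qed

end
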